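(* For norm-one $a,b\in\mathbb{O}$, the algebras ${}^*\mathbb{O}_l(a,1)$ and ${}^*\mathbb{O}_l(b,1)$ are isomorphic if and only if $|\mathrm{Re}(a)|=|\mathrm{Re}(b)|$.
   Context: $\mathbb{O}$ is the real octonion algebra; $\mathrm{Re}(a)$ is the real part of $a$ (its component along $1$ in $\mathbb{O}=\mathbb{R}\oplus\mathrm{Im}(\mathbb{O})$), and $\bar x$ is conjugation. For norm-one $a$, ${}^*\mathbb{O}_l(a,1)$ is the normed space of $\mathbb{O}$ with product $x\odot y=(\bar x a)y$. *)

theory Defs
  imports "HOL-Analysis.Analysis"
begin

text \<open>Quaternions as pairs of complex numbers and octonions as pairs of quaternions,
  via the Cayley-Dickson construction (a,b)(c,d) = (ac - d^* b, da + b c^*),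
  conjugation (a,b)^* = (a^*, -b).  The underlying real vector space of
  oct is the product vector space (Euclidean norm on R^8).\<close>

type_synonym quat = "complex \<times> complex"
type_synonym oct = "quat \<times> quat"

fun qmul :: "quat \<Rightarrow> quat \<Rightarrow> quat" where
  "qmul (a, b) (c, d) = (a * c - cnj d * b, d * a + b * cnj c)"

fun qcnj :: "quat \<Rightarrow> quat" where
  "qcnj (a, b) = (cnj a, - b)"

fun omul :: "oct \<Rightarrow> oct \<Rightarrow> oct" where
  "omul (p, q) (r, s) = (qmul p r - qmul (qcnj s) q, qmul s p + qmul q (qcnj r))"

fun ocnj :: "oct \<Rightarrow> oct" where
  "ocnj (p, q) = (qcnj p, - q)"

text \<open>Real part: the component along the unit 1 = ((1,0),(0,0)).\<close>
fun oRe :: "oct \<Rightarrow> real" where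
  "oRe ((a, b), q) = Re a"

text \<open>The product of *O_l(a,1): x \<odot> y = (conj(x) a) y.\<close>
definition star_mul :: "oct \<Rightarrow> oct \<Rightarrow> oct \<Rightarrow> oct" where
  "star_mul a x y = omul (omul (ocnj x) a) y"

definition alg_iso :: "(oct \<Rightarrow> oct \<Rightarrow> oct) \<Rightarrow> (oct \<Rightarrow> oct \<Rightarrow> oct) \<Rightarrow> (oct \<Rightarrow> oct) \<Rightarrow> bool" where
  "alg_iso m1 m2 f \<longleftrightarrow> linear f \<and> bij f \<and> (\<forall>x y. f (m1 x y) = m2 (f x) (f y))"

end

theory Submission
  imports Defs
begin

text \<open>If \<open>norm a = 1\<close>, then \<open>a\<close> is the unique left identity of \<open>*O_l(a,1)\<close>, so an
  isomorphism onto \<open>*O_l(b,1)\<close> maps \<open>a\<close> to \<open>b\<close> and hence conjugates the linear map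
  \<open>x \<mapsto> x \<odot> a = (conj x \<cdot> a) \<cdot> a\<close> into \<open>x \<mapsto> x \<odot> b\<close>. The trace of the former is
  \<open>6 - 12 Re(a)\<^sup>2\<close>, so \<open>Re(a)\<^sup>2 = Re(b)\<^sup>2\<close>.

  Conversely, every automorphism \<open>\<phi>\<close> of the octonions commuting with conjugation is an
  isomorphism \<open>*O_l(a,1) \<cong> *O_l(\<phi> a,1)\<close>, and such automorphisms move any unit \<open>a\<close> to
  \<open>Re(a) + sqrt(1 - Re(a)\<^sup>2) e\<^sub>4\<close>. Together with the isomorphism \<open>x \<mapsto> -x\<close> from
  \<open>*O_l(a,1)\<close> to \<open>*O_l(-a,1)\<close> this covers both cases \<open>Re(a) = \<plusminus>Re(b)\<close>.\<close>

definition op_trace :: "('a::euclidean_space \<Rightarrow> 'a) \<Rightarrow> real" where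
  "op_trace f = (\<Sum>b\<in>Basis. f b \<bullet> b)"

lemma linear_inner_expand:
  assumes "linear f"
  shows "f x \<bullet> y = (\<Sum>c\<in>Basis. (x \<bullet> c) * (f c \<bullet> y))"
proof -
  have "f x = (\<Sum>c\<in>Basis. (x \<bullet> c) *\<^sub>R f c)"
    using linear_sum[OF assms, of "\<lambda>c. (x \<bullet> c) *\<^sub>R c" Basis]
    by (simp add: linear_scale[OF assms] euclidean_representation)
  then show ?thesis by (simp add: inner_sum_left)
qed

lemma op_trace_comp_commute:
  fixes f :: "'b::euclidean_space \<Rightarrow> 'a::euclidean_space" and g :: "'a \<Rightarrow> 'b"
  assumes "linear f" and "linear g"
  shows "op_trace (f \<circ> g) = op_trace (g \<circ> f)"
proof -
  have fg: "f (g b) \<bullet> b = (\<Sum>c\<in>Basis. (g b \<bullet> c) * (f c \<bullet> b))" for b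
    by (rule linear_inner_expand[OF assms(1)])
  have gf: "g (f c) \<bullet> c = (\<Sum>b\<in>Basis. (f c \<bullet> b) * (g b \<bullet> c))" for c
    by (rule linear_inner_expand[OF assms(2)])
  show ?thesis
    unfolding op_trace_def comp_def fg gf
    by (subst sum.swap) (simp only: mult.commute)
qed

lemma op_trace_similar:
  fixes h :: "'a::euclidean_space \<Rightarrow> 'a"
  assumes "linear h" and "bij h" and "linear T'" and "\<And>x. h (T x) = T' (h x)"
  shows "op_trace T = op_trace T'"
proof -
  have inv_h: "linear (inv h)" "\<And>x. inv h (h x) = x" "\<And>x. h (inv h x) = x"
    using assms(1,2) eucl.inj_linear_imp_inv_linear[of h] by (auto simp: bij_def surj_f_inv_f)
  have "T = inv h \<circ> (T' \<circ> h)"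
    by (rule ext) (simp flip: assms(4) add: inv_h(2))
  then have "op_trace T = op_trace ((T' \<circ> h) \<circ> inv h)"
    by (simp only: op_trace_comp_commute[OF inv_h(1) linear_compose[OF assms(1,3)]])
  also have "(T' \<circ> h) \<circ> inv h = T'"
    by (rule ext) (simp add: inv_h(3))
  finally show ?thesis .
qed

lemma sum_Basis_prod:
  fixes f :: "'a::euclidean_space \<times> 'b::euclidean_space \<Rightarrow> 'c::comm_monoid_add"
  shows "(\<Sum>i\<in>Basis. f i) = (\<Sum>u\<in>Basis. f (u, 0)) + (\<Sum>v\<in>Basis. f (0, v))"
proof -
  have "inj_on (\<lambda>u. (u::'a, 0::'b)) Basis" "inj_on (\<lambda>v. (0::'a, v::'b)) Basis"
    by (auto intro!: inj_onI)
  then show ?thesis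
    unfolding Basis_prod_def by (subst sum.union_disjoint) (auto simp: sum.reindex)
qed

lemma alg_iso_comp:
  assumes "alg_iso m1 m2 f" and "alg_iso m2 m3 g"
  shows "alg_iso m1 m3 (g \<circ> f)"
proof -
  have "linear f" "bij f" "\<And>x y. f (m1 x y) = m2 (f x) (f y)"
    and "linear g" "bij g" "\<And>x y. g (m2 x y) = m3 (g x) (g y)"
    using assms unfolding alg_iso_def by blast+
  then show ?thesis unfolding alg_iso_def by (simp add: linear_compose bij_comp)
qed

lemma alg_iso_inv:
  assumes "alg_iso m1 m2 f"
  shows "alg_iso m2 m1 (inv f)"
proof -
  have f: "linear f" "bij f" "\<And>x y. f (m1 x y) = m2 (f x) (f y)"
    using assms unfolding alg_iso_def by auto
  have "inv f (m2 x y) = m1 (inv f x) (inv f y)" for x y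
    using f(2,3) by (metis bij_inv_eq_iff bij_is_surj surj_f_inv_f)
  then show ?thesis
    using f eucl.inj_linear_imp_inv_linear[of f]
    unfolding alg_iso_def by (simp add: bij_imp_bij_inv bij_is_inj)
qed

lemma qcnj_qcnj [simp]: "qcnj (qcnj p) = p"
  by (cases p) simp

lemma ocnj_ocnj [simp]: "ocnj (ocnj x) = x"
  by (cases x) simp

lemma omul_one_left: "omul ((1, 0), (0, 0)) x = x"
  by (cases x) (auto simp: zero_prod_def)

lemma omul_one_right: "omul x ((1, 0), (0, 0)) = x"
  by (cases x) (auto simp: zero_prod_def)

lemma omul_ocnj_self: "omul (ocnj a) a = ((of_real ((norm a)\<^sup>2), 0), (0, 0))"
proof -
  obtain a1 a2 a3 a4 where a: "a = ((a1, a2), (a3, a4))" by (metis prod.collapse)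
  show ?thesis
    unfolding a
    by (simp add: norm_Pair cmod_power2 cmod_power2[unfolded power2_eq_square] complex_eq_iff
        algebra_simps power2_eq_square)
qed

lemma omul_omul_ocnj_right: "omul (omul x a) (ocnj a) = (norm a)\<^sup>2 *\<^sub>R x"
proof -
  obtain a1 a2 a3 a4 where a: "a = ((a1, a2), (a3, a4))" by (metis prod.collapse)
  obtain x1 x2 x3 x4 where x: "x = ((x1, x2), (x3, x4))" by (metis prod.collapse)
  show ?thesis
    unfolding a x
    by (simp add: norm_Pair cmod_power2 cmod_power2[unfolded power2_eq_square] complex_eq_iff
        algebra_simps power2_eq_square)
qed

lemma star_mul_left_unit:
  assumes "norm a = 1"
  shows "star_mul a a y = y"
  using assms by (simp add: star_mul_def omul_ocnj_self omul_one_left)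

lemma star_mul_left_unit_unique:
  assumes "norm a = 1" and "\<And>y. star_mul a e y = y"
  shows "e = a"
proof -
  have "omul (ocnj e) a = ((1, 0), (0, 0))"
    using assms(2)[of "((1, 0), (0, 0))"] by (simp add: star_mul_def omul_one_right)
  then have "ocnj e = ocnj a"
    using omul_omul_ocnj_right[of "ocnj e" a] assms(1) by (simp add: omul_one_left)
  then show ?thesis by (metis ocnj_ocnj)
qed

lemma alg_iso_star_mul_unit:
  assumes iso: "alg_iso (star_mul a) (star_mul b) h" and "norm a = 1" and "norm b = 1"
  shows "h a = b"
proof -
  have "surj h" and hom: "\<And>x y. h (star_mul a x y) = star_mul b (h x) (h y)"
    using iso unfolding alg_iso_def by (auto simp: bij_is_surj)
  have "star_mul b (h a) (h z) = h z" for z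
    by (simp flip: hom add: star_mul_left_unit assms(2))
  then have "star_mul b (h a) y = y" for y
    using \<open>surj h\<close> by (metis surjD)
  then show ?thesis using star_mul_left_unit_unique assms(3) by blast
qed

lemma linear_star_mul: "linear (\<lambda>x. star_mul a x y)"
proof (rule linearI)
  fix x x' :: oct and c :: real
  obtain a1 a2 a3 a4 where a: "a = ((a1, a2), (a3, a4))" by (metis prod.collapse)
  obtain y1 y2 y3 y4 where y: "y = ((y1, y2), (y3, y4))" by (metis prod.collapse)
  obtain x1 x2 x3 x4 where x: "x = ((x1, x2), (x3, x4))" by (metis prod.collapse)
  obtain x1' x2' x3' x4' where x': "x' = ((x1', x2'), (x3', x4'))" by (metis prod.collapse)
  show "star_mul a (x + x') y = star_mul a x y + star_mul a x' y"
    unfolding a x x' y star_mul_def by (simp add: complex_eq_iff algebra_simps)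
  show "star_mul a (c *\<^sub>R x) y = c *\<^sub>R star_mul a x y"
    unfolding a x y star_mul_def by (simp add: complex_eq_iff algebra_simps)
qed

lemma op_trace_star_mul_square:
  "op_trace (\<lambda>x. star_mul a x a) = 6 * (norm a)\<^sup>2 - 12 * (oRe a)\<^sup>2"
proof -
  obtain a1 a2 a3 a4 where a: "a = ((a1, a2), (a3, a4))" by (metis prod.collapse)
  show ?thesis
    unfolding a op_trace_def
    by (simp add: sum_Basis_prod Basis_complex_def star_mul_def inner_prod_def inner_complex_def
        norm_Pair cmod_power2 cmod_power2[unfolded power2_eq_square] zero_prod_def
        algebra_simps power2_eq_square)
qed

lemma alg_iso_star_mul_abs_oRe:
  assumes iso: "alg_iso (star_mul a) (star_mul b) h" and a: "norm a = 1" and b: "norm b = 1"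
  shows "\<bar>oRe a\<bar> = \<bar>oRe b\<bar>"
proof -
  have "linear h" "bij h" and hom: "\<And>x y. h (star_mul a x y) = star_mul b (h x) (h y)"
    using iso unfolding alg_iso_def by auto
  have "h (star_mul a x a) = star_mul b (h x) b" for x
    by (simp add: hom alg_iso_star_mul_unit[OF iso a b])
  then have "op_trace (\<lambda>x. star_mul a x a) = op_trace (\<lambda>x. star_mul b x b)"
    by (rule op_trace_similar[OF \<open>linear h\<close> \<open>bij h\<close> linear_star_mul])
  then have "(oRe a)\<^sup>2 = (oRe b)\<^sup>2"
    by (simp add: op_trace_star_mul_square a b)
  then show ?thesis
    by (metis real_sqrt_abs)
qed

definition star_isomorphic :: "oct \<Rightarrow> oct \<Rightarrow> bool" where
  "star_isomorphic a b \<longleftrightarrow> (\<exists>f. alg_iso (star_mul a) (star_mul b) f)"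

lemma star_isomorphic_trans [trans]:
  "star_isomorphic a b \<Longrightarrow> star_isomorphic b c \<Longrightarrow> star_isomorphic a c"
  unfolding star_isomorphic_def by (blast intro: alg_iso_comp)

lemma star_isomorphic_sym: "star_isomorphic a b \<Longrightarrow> star_isomorphic b a"
  unfolding star_isomorphic_def by (blast intro: alg_iso_inv)

lemma star_isomorphic_uminus: "star_isomorphic a (- a)"
proof -
  have "linear (uminus :: oct \<Rightarrow> oct)" by (rule linearI) auto
  moreover have "bij (uminus :: oct \<Rightarrow> oct)" by (rule o_bij[of uminus]) auto
  moreover have "- star_mul a x y = star_mul (- a) (- x) (- y)" for x y
    unfolding star_mul_def by (cases x; cases y; cases a) (auto simp: algebra_simps)
  ultimately show ?thesis unfolding star_isomorphic_def alg_iso_def by blast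
qed

definition oct_aut :: "(oct \<Rightarrow> oct) \<Rightarrow> bool" where
  "oct_aut \<phi> \<longleftrightarrow> linear \<phi> \<and> bij \<phi> \<and> (\<forall>x y. \<phi> (omul x y) = omul (\<phi> x) (\<phi> y))
    \<and> (\<forall>x. \<phi> (ocnj x) = ocnj (\<phi> x))"

lemma star_isomorphic_oct_aut:
  assumes "oct_aut \<phi>"
  shows "star_isomorphic a (\<phi> a)"
proof -
  have "linear \<phi>" "bij \<phi>" "\<And>x y. \<phi> (omul x y) = omul (\<phi> x) (\<phi> y)"
    and "\<And>x. \<phi> (ocnj x) = ocnj (\<phi> x)"
    using assms unfolding oct_aut_def by blast+
  then have "alg_iso (star_mul a) (star_mul (\<phi> a)) \<phi>"
    unfolding alg_iso_def star_mul_def by simp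
  then show ?thesis unfolding star_isomorphic_def by blast
qed

lemma qmul_assoc: "qmul (qmul x y) z = qmul x (qmul y z)"
  by (cases x; cases y; cases z) (simp add: algebra_simps)

lemma qcnj_qmul: "qcnj (qmul x y) = qmul (qcnj y) (qcnj x)"
  by (cases x; cases y) (simp add: algebra_simps)

lemma qmul_add_right: "qmul x (y + z) = qmul x y + qmul x z"
  by (cases x; cases y; cases z) (simp add: algebra_simps)

lemma qmul_neg_right: "qmul x (- y) = - qmul x y"
  by (cases x; cases y) (simp add: algebra_simps)

lemma qmul_scaleR_left: "qmul (c *\<^sub>R x) y = c *\<^sub>R qmul x y"
  by (cases x; cases y) (simp add: algebra_simps scaleR_conv_of_real)

lemma qmul_scaleR_right: "qmul x (c *\<^sub>R y) = c *\<^sub>R qmul x y"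
  by (cases x; cases y) (simp add: algebra_simps scaleR_conv_of_real)

lemma qmul_one_left: "qmul (1, 0) y = y"
  by (cases y) simp

lemma norm_qcnj: "norm (qcnj p) = norm p"
  by (cases p) (simp add: norm_Pair)

lemma qmul_qcnj_self: "qmul (qcnj p) p = (of_real ((norm p)\<^sup>2), 0)"
proof (cases p)
  case (Pair z w)
  have "cnj z * z = of_real ((cmod z)\<^sup>2)" "cnj w * w = of_real ((cmod w)\<^sup>2)"
    by (metis complex_norm_square mult.commute of_real_power)+
  then show ?thesis using Pair by (simp add: norm_Pair)
qed

lemma exists_unit_qmul_eq_norm: "\<exists>r. norm r = 1 \<and> qmul r q = (of_real (norm q), 0)"
proof (cases "q = 0")
  case True
  then show ?thesis by (intro exI[of _ "(1, 0)"]) (simp add: zero_prod_def)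
next
  case False
  then have "norm q \<noteq> 0" by simp
  then have "qmul ((1 / norm q) *\<^sub>R qcnj q) q = (of_real (norm q), 0)"
    by (simp add: qmul_scaleR_left qmul_qcnj_self power2_eq_square scaleR_conv_of_real)
  then show ?thesis
    using \<open>norm q \<noteq> 0\<close> by (intro exI[of _ "(1 / norm q) *\<^sub>R qcnj q"]) (simp add: norm_qcnj)
qed

definition lmul_snd :: "quat \<Rightarrow> oct \<Rightarrow> oct" where
  "lmul_snd r x = (fst x, qmul r (snd x))"

lemma oct_aut_lmul_snd:
  assumes "norm r = 1"
  shows "oct_aut (lmul_snd r)"
  unfolding oct_aut_def
proof (intro conjI allI)
  have r: "qmul (qcnj r) r = (1, 0)" "qmul r (qcnj r) = (1, 0)"
    using assms qmul_qcnj_self[of r] qmul_qcnj_self[of "qcnj r"] by (simp_all add: norm_qcnj)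
  show "linear (lmul_snd r)"
    by (rule linearI) (simp_all add: lmul_snd_def qmul_add_right qmul_scaleR_right)
  show "bij (lmul_snd r)"
    by (rule o_bij[of "lmul_snd (qcnj r)"])
       (simp_all add: fun_eq_iff lmul_snd_def r qmul_one_left flip: qmul_assoc)
  show "lmul_snd r (omul x y) = omul (lmul_snd r x) (lmul_snd r y)" for x y
  proof -
    obtain p q s t where "x = (p, q)" and "y = (s, t)" by (cases x, cases y)
    moreover have "qmul (qcnj (qmul r t)) (qmul r q) = qmul (qcnj t) q"
      by (simp add: qcnj_qmul qmul_assoc r qmul_one_left flip: qmul_assoc[of "qcnj r"])
    ultimately show ?thesis
      by (simp add: lmul_snd_def qmul_add_right qmul_assoc)
  qed
  show "lmul_snd r (ocnj x) = ocnj (lmul_snd r x)" for x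
    by (cases x) (simp only: lmul_snd_def ocnj.simps fst_conv snd_conv qmul_neg_right)
qed

lemma star_isomorphic_snd_real: "star_isomorphic (p, q) (p, (of_real (norm q), 0))"
proof -
  obtain r where "norm r = 1" and "qmul r q = (of_real (norm q), 0)"
    using exists_unit_qmul_eq_norm by blast
  then show ?thesis
    using star_isomorphic_oct_aut[OF oct_aut_lmul_snd, of r "(p, q)"] by (simp add: lmul_snd_def)
qed

text \<open>With \<open>e\<^sub>0, \<dots>, e\<^sub>7\<close> the standard real basis of \<open>oct\<close> in coordinate order, these
  permute it as \<open>(e\<^sub>2 e\<^sub>4 e\<^sub>7)(e\<^sub>3 e\<^sub>5 e\<^sub>6)\<close> and \<open>(e\<^sub>1 e\<^sub>4 e\<^sub>5)(e\<^sub>2 e\<^sub>6 e\<^sub>3)\<close>; in particular both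
  have order 3.\<close>

definition oct_cycle1 :: "oct \<Rightarrow> oct" where
  "oct_cycle1 = (\<lambda>((z1, z2), (z3, z4)). ((z1, \<i> * cnj z4), (z2, \<i> * cnj z3)))"

definition oct_cycle2 :: "oct \<Rightarrow> oct" where
  "oct_cycle2 = (\<lambda>((z1, z2), (z3, z4)).
     ((Complex (Re z1) (Im z3), Complex (Im z2) (Re z4)),
      (Complex (Im z1) (Re z3), Complex (Re z2) (Im z4))))"

lemma oct_aut_oct_cycle1: "oct_aut oct_cycle1"
  unfolding oct_aut_def
proof (intro conjI allI)
  show "linear oct_cycle1"
    by (rule linearI) (auto simp: oct_cycle1_def complex_eq_iff split: prod.splits)
  show "bij oct_cycle1"
    by (rule o_bij[of "oct_cycle1 \<circ> oct_cycle1"])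
       (auto simp: fun_eq_iff oct_cycle1_def complex_eq_iff split: prod.splits)
  show "oct_cycle1 (omul x y) = omul (oct_cycle1 x) (oct_cycle1 y)" for x y
    by (cases x; cases y) (auto simp: oct_cycle1_def complex_eq_iff algebra_simps split: prod.splits)
  show "oct_cycle1 (ocnj x) = ocnj (oct_cycle1 x)" for x
    by (cases x) (auto simp: oct_cycle1_def complex_eq_iff split: prod.splits)
qed

lemma oct_aut_oct_cycle2: "oct_aut oct_cycle2"
  unfolding oct_aut_def
proof (intro conjI allI)
  show "linear oct_cycle2"
    by (rule linearI) (auto simp: oct_cycle2_def complex_eq_iff split: prod.splits)
  show "bij oct_cycle2"
    by (rule o_bij[of "oct_cycle2 \<circ> oct_cycle2"])
       (auto simp: fun_eq_iff oct_cycle2_def complex_eq_iff split: prod.splits)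
  show "oct_cycle2 (omul x y) = omul (oct_cycle2 x) (oct_cycle2 y)" for x y
    by (cases x; cases y) (auto simp: oct_cycle2_def complex_eq_iff algebra_simps split: prod.splits)
  show "oct_cycle2 (ocnj x) = ocnj (oct_cycle2 x)" for x
    by (cases x) (auto simp: oct_cycle2_def complex_eq_iff split: prod.splits)
qed

lemma star_isomorphic_standard:
  assumes "norm a = 1"
  shows "star_isomorphic a ((of_real (oRe a), 0), (of_real (sqrt (1 - (oRe a)\<^sup>2)), 0))"
proof -
  obtain z1 z2 q where a: "a = ((z1, z2), q)" by (metis prod.collapse)
  define N1 where "N1 = norm q"
  define N2 where "N2 = norm (z2, \<i> * of_real N1)"
  define N3 where "N3 = norm (Complex (Im z1) N2, 0 :: complex)"
  have "star_isomorphic a ((z1, z2), (of_real N1, 0))"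
    unfolding a N1_def by (rule star_isomorphic_snd_real)
  also have "star_isomorphic \<dots> ((z1, 0), (z2, \<i> * of_real N1))"
    using star_isomorphic_oct_aut[OF oct_aut_oct_cycle1, of "((z1, z2), (of_real N1, 0))"]
    by (simp add: oct_cycle1_def)
  also have "star_isomorphic \<dots> ((z1, 0), (of_real N2, 0))"
    unfolding N2_def by (rule star_isomorphic_snd_real)
  also have "star_isomorphic \<dots> ((of_real (Re z1), 0), (Complex (Im z1) N2, 0))"
    using star_isomorphic_oct_aut[OF oct_aut_oct_cycle2, of "((z1, 0), (of_real N2, 0))"]
    by (simp add: oct_cycle2_def Complex_eq)
  also have "star_isomorphic \<dots> ((of_real (Re z1), 0), (of_real N3, 0))"
    unfolding N3_def by (rule star_isomorphic_snd_real)
  also have "N3 = sqrt (1 - (Re z1)\<^sup>2)"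
    using assms by (simp add: a N1_def N2_def N3_def norm_Pair norm_mult cmod_power2 cmod_def)
  finally show ?thesis by (simp add: a)
qed

lemma star_isomorphic_if_oRe_eq:
  assumes "norm a = 1" and "norm b = 1" and "oRe a = oRe b"
  shows "star_isomorphic a b"
  using star_isomorphic_standard[OF assms(1)] star_isomorphic_standard[OF assms(2)] assms(3)
  by (metis star_isomorphic_sym star_isomorphic_trans)

lemma star_isomorphic_if_abs_oRe_eq:
  assumes "norm a = 1" and "norm b = 1" and "\<bar>oRe a\<bar> = \<bar>oRe b\<bar>"
  shows "star_isomorphic a b"
proof (cases "oRe a = oRe b")
  case True
  then show ?thesis by (rule star_isomorphic_if_oRe_eq[OF assms(1,2)])
next
  case False
  then have "oRe (- a) = oRe b" using assms(3) by (cases a) (auto simp: abs_if split: if_splits)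
  then have "star_isomorphic (- a) b" using assms(1,2) by (simp add: star_isomorphic_if_oRe_eq)
  with star_isomorphic_uminus show ?thesis by (rule star_isomorphic_trans)
qed

theorem corollary1:
  fixes a b :: oct
  assumes "norm a = 1" and "norm b = 1"
  shows "(\<exists>f. alg_iso (star_mul a) (star_mul b) f) \<longleftrightarrow> \<bar>oRe a\<bar> = \<bar>oRe b\<bar>"
  using alg_iso_star_mul_abs_oRe[OF _ assms] star_isomorphic_if_abs_oRe_eq[OF assms]
  unfolding star_isomorphic_def by blast

end
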